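(* Every signed $Z_4$-colourable graph is $\{1,1,2\}$-choosable.
   Context: A signed graph is a pair $(G,\sigma)$ with $\sigma:E(G)\to\{-1,+1\}$. A $Z_4$-colouring of $(G,\sigma)$ is a map $f:V(G)\to\mathbb Z_4$ such that $f(x)\ne\sigma(e)f(y)$ in $\mathbb Z_4$ for every edge $e=xy$. $G$ is signed $Z_4$-colourable if $(G,\sigma)$ has a $Z_4$-colouring for every signature $\sigma$. For a partition $\lambda=\{k_1,\dots,k_q\}$ of $k$, a $\lambda$-assignment of $G$ is an assignment $L$ with $|L(v)|=k$ for all $v$ such that $\bigcup_vL(v)$ can be partitioned into sets $C_1,\dots,C_q$ with $|L(v)\cap C_i|=k_i$ for all $v$ and $i$; $G$ is $\lambda$-choosable if for every $\lambda$-assignment $L$ there is a proper colouring $f$ with $f(v)\in L(v)$ for all $v$. *)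

theory Defs
  imports Main "HOL-Library.Numeral_Type"
begin

definition simple_graph :: "'a set \<Rightarrow> ('a \<Rightarrow> 'a \<Rightarrow> bool) \<Rightarrow> bool" where
  "simple_graph V E \<longleftrightarrow> finite V \<and> (\<forall>x y. E x y \<longrightarrow> x \<in> V \<and> y \<in> V)
     \<and> (\<forall>x y. E x y \<longrightarrow> E y x) \<and> (\<forall>x. \<not> E x x)"

definition signature :: "'a set \<Rightarrow> ('a \<Rightarrow> 'a \<Rightarrow> bool) \<Rightarrow> ('a \<Rightarrow> 'a \<Rightarrow> bool) \<Rightarrow> bool" where
  "signature V E \<sigma> \<longleftrightarrow> (\<forall>x y. E x y \<longrightarrow> \<sigma> x y = \<sigma> y x)"

definition sign_val :: "bool \<Rightarrow> 4" where
  "sign_val s = (if s then 1 else -1)"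

definition Z4_colouring :: "'a set \<Rightarrow> ('a \<Rightarrow> 'a \<Rightarrow> bool) \<Rightarrow> ('a \<Rightarrow> 'a \<Rightarrow> bool) \<Rightarrow> ('a \<Rightarrow> 4) \<Rightarrow> bool" where
  "Z4_colouring V E \<sigma> f \<longleftrightarrow> (\<forall>x y. E x y \<longrightarrow> f x \<noteq> sign_val (\<sigma> x y) * f y)"

definition signed_Z4_colourable :: "'a set \<Rightarrow> ('a \<Rightarrow> 'a \<Rightarrow> bool) \<Rightarrow> bool" where
  "signed_Z4_colourable V E \<longleftrightarrow>
     (\<forall>\<sigma>. signature V E \<sigma> \<longrightarrow> (\<exists>f. Z4_colouring V E \<sigma> f))"

text \<open>A partition \<lambda> = {k_1,...,k_q} of k is given as a list ks of its parts;
k = sum_list ks.\<close>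
definition lambda_assignment :: "nat list \<Rightarrow> 'a set \<Rightarrow> ('a \<Rightarrow> 'c set) \<Rightarrow> bool" where
  "lambda_assignment ks V L \<longleftrightarrow>
     (\<forall>v\<in>V. finite (L v) \<and> card (L v) = sum_list ks) \<and>
     (\<exists>C :: nat \<Rightarrow> 'c set.
        (\<Union>i<length ks. C i) = (\<Union>v\<in>V. L v) \<and>
        (\<forall>i<length ks. \<forall>j<length ks. i \<noteq> j \<longrightarrow> C i \<inter> C j = {}) \<and>
        (\<forall>v\<in>V. \<forall>i<length ks. card (L v \<inter> C i) = ks ! i))"

definition lambda_choosable :: "nat list \<Rightarrow> 'a set \<Rightarrow> ('a \<Rightarrow> 'a \<Rightarrow> bool) \<Rightarrow> 'c itself \<Rightarrow> bool" where
  "lambda_choosable ks V E _ \<longleftrightarrow>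
     (\<forall>L :: 'a \<Rightarrow> 'c set. lambda_assignment ks V L \<longrightarrow>
        (\<exists>f. (\<forall>v\<in>V. f v \<in> L v) \<and> (\<forall>x y. E x y \<longrightarrow> f x \<noteq> f y)))"

end

theory Submission
  imports Defs
begin

text \<open>Write a \<open>{1,1,2}\<close>-list as \<open>L(v) \<supseteq> {a(v), b(v), c(v), d(v)}\<close>, where \<open>a(v)\<close> and
  \<open>b(v)\<close> come from the two singleton classes and \<open>c(v) \<noteq> d(v)\<close> from the class of size two.
  Sign the edge \<open>xy\<close> positively exactly when \<open>c(x) = c(y)\<close> or \<open>d(x) = d(y)\<close>, take a
  \<open>Z\<^sub>4\<close>-colouring \<open>f\<close> of this signed graph and colour \<open>v\<close> by \<open>a(v), c(v), b(v), d(v)\<close>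
  according as \<open>f(v) = 0, 1, 2, 3\<close>. Vertices coloured \<open>0\<close> or \<open>2\<close> use classes of their own,
  and as \<open>0\<close> and \<open>2\<close> are their own negatives the signs are irrelevant for them. Between
  the colours \<open>\<plusminus>1\<close> a clash \<open>c(x) = c(y)\<close> or \<open>d(x) = d(y)\<close> is excluded by the positive sign,
  and a clash \<open>c(x) = d(y)\<close> forces \<open>c(y) \<noteq> c(x)\<close> and \<open>d(x) \<noteq> d(y)\<close>, i.e. a negative sign,
  which forbids \<open>f(x) = -f(y)\<close>.\<close>

lemma Z4_cases:
  fixes z :: 4
  obtains "z = 0" | "z = 1" | "z = 2" | "z = 3"
proof (cases z)
  case (of_int k)
  then have "k = 0 \<or> k = 1 \<or> k = 2 \<or> k = 3" by auto
  with of_int that show ?thesis by auto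
qed

lemma lambda_assignment_112_representatives:
  assumes "lambda_assignment [1, 1, 2] V L"
  obtains a b c d where
    "\<forall>v\<in>V. a v \<in> L v \<and> b v \<in> L v \<and> c v \<in> L v \<and> d v \<in> L v \<and> c v \<noteq> d v"
    "\<forall>u\<in>V. \<forall>v\<in>V. a u \<noteq> b v \<and> a u \<notin> {c v, d v} \<and> b u \<notin> {c v, d v}"
proof -
  obtain C :: "nat \<Rightarrow> _ set" where
    disj: "\<forall>i<3. \<forall>j<3. i \<noteq> j \<longrightarrow> C i \<inter> C j = {}" and
    cards: "\<forall>v\<in>V. \<forall>i<3. card (L v \<inter> C i) = [1, 1, 2::nat] ! i"
    using assms unfolding lambda_assignment_def by (auto simp: numeral_3_eq_3)
  have "\<forall>v\<in>V. \<exists>x y z w. x \<in> L v \<inter> C 0 \<and> y \<in> L v \<inter> C 1 \<and>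
      z \<in> L v \<inter> C 2 \<and> w \<in> L v \<inter> C 2 \<and> z \<noteq> w"
  proof
    fix v assume "v \<in> V"
    with cards have "card (L v \<inter> C 0) = 1" "card (L v \<inter> C 1) = 1" "card (L v \<inter> C 2) = 2"
      by fastforce+
    then obtain x y z w where "L v \<inter> C 0 = {x}" "L v \<inter> C 1 = {y}"
        "L v \<inter> C 2 = {z, w}" "z \<noteq> w"
      by (auto simp: card_1_singleton_iff card_2_iff)
    then show "\<exists>x y z w. x \<in> L v \<inter> C 0 \<and> y \<in> L v \<inter> C 1 \<and>
        z \<in> L v \<inter> C 2 \<and> w \<in> L v \<inter> C 2 \<and> z \<noteq> w"
      by blast
  qed
  then obtain a b c d where
    "\<forall>v\<in>V. a v \<in> L v \<inter> C 0 \<and> b v \<in> L v \<inter> C 1 \<and>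
      c v \<in> L v \<inter> C 2 \<and> d v \<in> L v \<inter> C 2 \<and> c v \<noteq> d v"
    by metis
  moreover have "C 0 \<inter> C 1 = {}" "C 0 \<inter> C 2 = {}" "C 1 \<inter> C 2 = {}"
    using disj by auto
  ultimately show thesis
    by (intro that[of a b c d]) auto
qed

definition Z4_choice ::
    "('a \<Rightarrow> 'c) \<Rightarrow> ('a \<Rightarrow> 'c) \<Rightarrow> ('a \<Rightarrow> 'c) \<Rightarrow> ('a \<Rightarrow> 'c) \<Rightarrow> ('a \<Rightarrow> 4) \<Rightarrow> 'a \<Rightarrow> 'c" where
  "Z4_choice a b c d f v =
     (if f v = 0 then a v else if f v = 1 then c v else if f v = 2 then b v else d v)"

lemma Z4_choice_differs_on_edge:
  fixes f :: "'a \<Rightarrow> 4"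
  assumes reps: "\<forall>v\<in>V. c v \<noteq> d v"
      "\<forall>u\<in>V. \<forall>v\<in>V. a u \<noteq> b v \<and> a u \<notin> {c v, d v} \<and> b u \<notin> {c v, d v}"
    and f: "Z4_colouring V E (\<lambda>x y. c x = c y \<or> d x = d y) f"
    and "E x y" "x \<in> V" "y \<in> V"
  shows "Z4_choice a b c d f x \<noteq> Z4_choice a b c d f y"
proof -
  have sign: "f x \<noteq> sign_val (c x = c y \<or> d x = d y) * f y"
    using f \<open>E x y\<close> unfolding Z4_colouring_def by blast
  have "c x \<noteq> d x" "c y \<noteq> d y"
    "a x \<noteq> b y" "a y \<noteq> b x" "a x \<notin> {c y, d y}" "a y \<notin> {c x, d x}"
    "b x \<notin> {c y, d y}" "b y \<notin> {c x, d x}"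
    using reps \<open>x \<in> V\<close> \<open>y \<in> V\<close> by blast+
  with sign show ?thesis
    by (cases rule: Z4_cases[of "f x"]; cases rule: Z4_cases[of "f y"])
      (auto simp: Z4_choice_def sign_val_def split: if_split_asm)
qed

theorem theorem12:
  fixes V :: "'a set" and E :: "'a \<Rightarrow> 'a \<Rightarrow> bool"
  assumes "simple_graph V E"
    and "signed_Z4_colourable V E"
  shows "lambda_choosable [1, 1, 2] V E TYPE('c)"
  unfolding lambda_choosable_def
proof (intro allI impI)
  fix L :: "'a \<Rightarrow> 'c set"
  assume "lambda_assignment [1, 1, 2] V L"
  then obtain a b c d where
    in_lists: "\<forall>v\<in>V. a v \<in> L v \<and> b v \<in> L v \<and> c v \<in> L v \<and> d v \<in> L v \<and> c v \<noteq> d v" and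
    distinct: "\<forall>u\<in>V. \<forall>v\<in>V. a u \<noteq> b v \<and> a u \<notin> {c v, d v} \<and> b u \<notin> {c v, d v}"
    by (rule lambda_assignment_112_representatives)
  have "signature V E (\<lambda>x y. c x = c y \<or> d x = d y)"
    unfolding signature_def by auto
  with assms(2) obtain f where f: "Z4_colouring V E (\<lambda>x y. c x = c y \<or> d x = d y) f"
    unfolding signed_Z4_colourable_def by blast
  have "\<forall>v\<in>V. Z4_choice a b c d f v \<in> L v"
    using in_lists by (simp add: Z4_choice_def)
  moreover have "Z4_choice a b c d f x \<noteq> Z4_choice a b c d f y" if "E x y" for x y
  proof (rule Z4_choice_differs_on_edge[OF _ distinct f \<open>E x y\<close>])
    show "x \<in> V" "y \<in> V"
      using assms(1) \<open>E x y\<close> unfolding simple_graph_def by auto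
  qed (use in_lists in blast)
  ultimately show "\<exists>g. (\<forall>v\<in>V. g v \<in> L v) \<and> (\<forall>x y. E x y \<longrightarrow> g x \<noteq> g y)"
    by blast
qed

end
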